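(* Let $m=2h+1\geq 3$ be odd and let $f_1(x)=x+x^{2^{h+1}-1}+x^{2^m-2^{h+1}+1}\in\mathbb{F}_{2^m}[x]$. Let $s^\infty$ be the sequence $s_t=\operatorname{Tr}(f_1(\alpha^t+1))$, $t\ge 0$. Then the binary cyclic code $\mathcal{C}_s$ has parameters $[2^m-1,\,2^m-2-m,\,4]$ and generator polynomial $g_s(x)=(x-1)\,m_{\alpha^{-1}}(x)$.
   Context: Let $m\ge 1$, $v=2^m-1$, $\alpha$ a primitive element of $\mathbb{F}_{2^m}$, and $\operatorname{Tr}(x)=\sum_{i=0}^{m-1}x^{2^i}$ the absolute trace from $\mathbb{F}_{2^m}$ to $\mathbb{F}_2$. For a polynomial $F$ over $\mathbb{F}_{2^m}$ the binary sequence $s^\infty=(s_t)_{t\ge0}$ is defined by $s_t=\operatorname{Tr}(F(\alpha^t+1))$; it is periodic with period dividing $v$. Its minimal polynomial $g_s(x)$ is the polynomial $1+c_1x+\dots+c_Lx^L\in\mathbb{F}_2[x]$ of least degree $L$ such that $s_i+c_1s_{i-1}+\dots+c_Ls_{i-L}=0$ for all $i\ge L$; its degree $L_s$ is the linear span of $s^\infty$. $\mathcal{C}_s$ denotes the binary cyclic code of length $v$ with generator polynomial $g_s(x)$ (so $\dim\mathcal{C}_s=v-L_s$). For an integer $i$, $m_{\alpha^i}(x)$ is the minimal polynomial of $\alpha^i$ over $\mathbb{F}_2$. $[n,k,d]$ denotes length, dimension, minimum Hamming distance. *)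

theory Defs
  imports "HOL-Computational_Algebra.Polynomial" "HOL-Library.Z2"
begin

text \<open>Binary alphabet F_2 is the library type bit (a field with two elements).\<close>

definition of_bit :: "bit \<Rightarrow> 'a::field" where
  "of_bit b = (if b = 0 then 0 else 1)"

definition to_bit :: "'a::field \<Rightarrow> bit" where
  "to_bit x = (if x = 0 then 0 else 1)"

text \<open>Absolute trace from F_{2^m} to F_2 (the value lies in the prime field {0,1}).\<close>
definition trace2 :: "nat \<Rightarrow> 'a::field \<Rightarrow> 'a" where
  "trace2 m x = (\<Sum>i<m. x ^ (2 ^ i))"

definition primitive_elem :: "'a::{field,finite} \<Rightarrow> bool" where
  "primitive_elem a \<longleftrightarrow> a \<noteq> 0 \<and> (\<forall>x. x \<noteq> 0 \<longrightarrow> (\<exists>k::nat. x = a ^ k))"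

definition is_minpoly_F2 :: "'a::field \<Rightarrow> bit poly \<Rightarrow> bool" where
  "is_minpoly_F2 \<beta> p \<longleftrightarrow> lead_coeff p = 1 \<and> poly (map_poly of_bit p) \<beta> = 0 \<and>
     (\<forall>q. q \<noteq> 0 \<and> poly (map_poly of_bit q) \<beta> = 0 \<longrightarrow> degree p \<le> degree q)"

definition minpoly_F2 :: "'a::field \<Rightarrow> bit poly" where
  "minpoly_F2 \<beta> = (SOME p. is_minpoly_F2 \<beta> p)"

definition seq_annihilates :: "(nat \<Rightarrow> bit) \<Rightarrow> bit poly \<Rightarrow> bool" where
  "seq_annihilates s c \<longleftrightarrow> coeff c 0 = 1 \<and>
     (\<forall>i\<ge>degree c. (\<Sum>j\<le>degree c. coeff c j * s (i - j)) = 0)"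

definition seq_minpoly :: "(nat \<Rightarrow> bit) \<Rightarrow> bit poly" where
  "seq_minpoly s = (SOME c. seq_annihilates s c \<and>
       (\<forall>d. seq_annihilates s d \<longrightarrow> degree c \<le> degree d))"

text \<open>Binary cyclic code of length n with generator polynomial g
  (codewords identified with polynomials of degree < n).\<close>
definition cyclic_code :: "nat \<Rightarrow> bit poly \<Rightarrow> bit poly set" where
  "cyclic_code n g = {c. degree c < n \<and> g dvd c}"

definition hamming_weight :: "bit poly \<Rightarrow> nat" where
  "hamming_weight c = card {i. coeff c i \<noteq> 0}"

definition min_distance :: "bit poly set \<Rightarrow> nat" where
  "min_distance C = Min (hamming_weight ` (C - {0}))"

end

(*
  The last two monomials of f_1 are conjugate under the Frobenius map, because
  (2^(h+1) - 1) 2^(h+1) = 2^m - 2^(h+1) + 1 modulo 2^m - 1; so they cancel under the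
  trace, and as m is odd (Tr 1 = 1) we get s_t = 1 + Tr(alpha^t).  With beta = alpha^(-1),
  the recurrence given by c evaluates at time i to c(1) + Tr(alpha^i c(beta)); if
  c(beta) were nonzero, alpha^i c(beta) would run through all nonzero elements, on which
  the trace is not constant.  Hence c annihilates s iff c(0) = 1, c(1) = 0 and c(beta) = 0,
  i.e. iff (x - 1) m_beta divides c, and g_s = (x - 1) m_beta has degree m + 1 since the
  conjugates beta^(2^i), i < m, are distinct.  The code is then the even-weight subcode of
  the Hamming code: weights are even, weight 2 is impossible as the beta^i, i < 2^m - 1,
  are distinct, and 1 + a + b + (1 + a + b) = 0 for suitable distinct a, b gives weight 4.
*)

theory Submission
  imports Defs
begin

(* keep arithmetic on bit in ring form instead of rewriting it to xor/and *)
declare add_bit_eq_xor [simp del] mult_bit_eq_and [simp del]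

section \<open>Binary polynomials over a field of characteristic two\<close>

abbreviation poly_F2 :: "bit poly \<Rightarrow> 'a::field \<Rightarrow> 'a" where
  "poly_F2 p \<equiv> poly (map_poly of_bit p)"

lemma of_bit_0 [simp]: "of_bit 0 = 0"
  by (simp add: of_bit_def)

lemma of_bit_1 [simp]: "of_bit 1 = 1"
  by (simp add: of_bit_def)

lemma of_bit_eq_0_iff [simp]: "(of_bit b :: 'a::field) = 0 \<longleftrightarrow> b = 0"
  by (cases b) simp_all

lemma of_bit_mult: "(of_bit (a * b) :: 'a::field) = of_bit a * of_bit b"
  by (cases a; cases b) simp_all

lemma of_bit_power: "n > 0 \<Longrightarrow> (of_bit b :: 'a::field) ^ n = of_bit b"
  by (cases b) simp_all

lemma of_to_bit: "y = 0 \<or> y = 1 \<Longrightarrow> of_bit (to_bit y) = y"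
  by (auto simp: to_bit_def)

lemma bit_poly_diff_eq_add: "(p :: bit poly) - q = p + q"
proof -
  have "(a :: bit) - b = a + b" for a b
    by (cases a; cases b) simp_all
  then show ?thesis
    by (intro poly_eqI) simp
qed

context
  assumes char2: "(1::'a::field) + 1 = 0"
begin

lemma two_eq_0_char2 [simp]: "(2::'a) = 0"
  using char2 by (simp add: one_add_one)

lemma add_self_char2 [simp]: "(x::'a) + x = 0"
  using char2 by (metis distrib_left mult_1_right mult_zero_right)

lemma add_eq_0_iff_char2: "(x::'a) + y = 0 \<longleftrightarrow> x = y"
  by (metis add_self_char2 add.assoc add_0_right add.commute)

lemma add_eq_iff_char2: "(x::'a) + y = z \<longleftrightarrow> y = x + z"
  by (metis add_self_char2 add.assoc add.left_neutral)

lemma of_bit_add: "(of_bit (a + b) :: 'a) = of_bit a + of_bit b"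
  by (cases a; cases b) simp_all

lemma of_bit_sum: "(of_bit (\<Sum>i\<in>A. f i) :: 'a) = (\<Sum>i\<in>A. of_bit (f i))"
  by (induction A rule: infinite_finite_induct) (simp_all add: of_bit_add)

lemma map_poly_of_bit_add:
  "map_poly (of_bit :: bit \<Rightarrow> 'a) (p + q) = map_poly of_bit p + map_poly of_bit q"
  by (intro poly_eqI) (simp add: coeff_map_poly of_bit_add)

lemma map_poly_of_bit_mult:
  "map_poly (of_bit :: bit \<Rightarrow> 'a) (p * q) = map_poly of_bit p * map_poly of_bit q"
proof (induction p)
  case (pCons a p)
  then show ?case
    by (simp add: map_poly_of_bit_add map_poly_pCons map_poly_smult of_bit_mult)
qed simp

lemma poly_F2_add: "poly_F2 (p + q) y = poly_F2 p y + (poly_F2 q y :: 'a)"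
  by (simp add: map_poly_of_bit_add)

lemma poly_F2_mult: "poly_F2 (p * q) y = poly_F2 p y * (poly_F2 q y :: 'a)"
  by (simp add: map_poly_of_bit_mult)

lemma add_power_two_power: "((x::'a) + y) ^ 2 ^ k = x ^ 2 ^ k + y ^ 2 ^ k"
proof (induction k arbitrary: x y)
  case (Suc k)
  have "(u + v) ^ 2 = u ^ 2 + v ^ 2" for u v :: 'a
    by (simp add: power2_eq_square algebra_simps)
  then show ?case
    by (simp add: power_mult Suc)
qed simp

lemma sum_power_two_power: "(\<Sum>i\<in>A. f i :: 'a) ^ 2 ^ k = (\<Sum>i\<in>A. f i ^ 2 ^ k)"
  by (induction A rule: infinite_finite_induct) (simp_all add: add_power_two_power)

lemma poly_F2_power_two_power: "poly_F2 p (y ^ 2 ^ k) = (poly_F2 p y :: 'a) ^ 2 ^ k"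
  by (induction p) (simp_all add: map_poly_pCons add_power_two_power power_mult_distrib
      of_bit_power power_mult[symmetric] mult.commute)

end

lemma poly_F2_eq_sum_support:
  "poly_F2 p y = (\<Sum>i | coeff p i \<noteq> 0. y ^ i)"
proof -
  have "poly_F2 p y = (\<Sum>i\<le>degree p. of_bit (coeff p i) * y ^ i)"
    by (simp add: poly_altdef degree_map_poly coeff_map_poly)
  also have "\<dots> = (\<Sum>i | coeff p i \<noteq> 0. of_bit (coeff p i) * y ^ i)"
    by (rule sum.mono_neutral_right) (auto intro: le_degree)
  also have "\<dots> = (\<Sum>i | coeff p i \<noteq> 0. y ^ i)"
    by (rule sum.cong) auto
  finally show ?thesis .
qed

lemma finite_support_coeff: "finite {i. coeff p i \<noteq> 0}"
  by (rule finite_subset[of _ "{..degree p}"]) (auto intro: le_degree)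

lemma poly_one_eq_0_iff_even_weight: "poly (p :: bit poly) 1 = 0 \<longleftrightarrow> even (hamming_weight p)"
proof -
  have of_nat_bit: "(of_nat n :: bit) = 0 \<longleftrightarrow> even n" for n
    by (induction n) auto
  have "poly p 1 = (\<Sum>i\<le>degree p. coeff p i)"
    by (simp add: poly_altdef)
  also have "\<dots> = (\<Sum>i | coeff p i \<noteq> 0. coeff p i)"
    by (rule sum.mono_neutral_right) (auto intro: le_degree)
  also have "\<dots> = of_nat (hamming_weight p)"
    by (simp add: hamming_weight_def)
  finally show ?thesis
    by (simp add: of_nat_bit)
qed

lemma card_bit_polys_degree_less:
  "finite {p :: bit poly. degree p < Suc k} \<and> card {p :: bit poly. degree p < Suc k} = 2 ^ Suc k"
proof (induction k)
  case 0
  have "{p :: bit poly. degree p < 1} = {0, 1}"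
    by (auto elim!: degree_eq_zeroE simp: one_pCons)
  then show ?case
    by simp
next
  case (Suc k)
  let ?P = "{p :: bit poly. degree p < Suc k}"
  have eq: "{p :: bit poly. degree p < Suc (Suc k)} = (\<lambda>(a, q). pCons a q) ` (UNIV \<times> ?P)"
  proof (intro set_eqI iffI)
    fix p :: "bit poly"
    assume "p \<in> {p. degree p < Suc (Suc k)}"
    moreover obtain a q where "p = pCons a q"
      by (cases p)
    ultimately show "p \<in> (\<lambda>(a, q). pCons a q) ` (UNIV \<times> ?P)"
      by (cases "q = 0") auto
  qed auto
  have UNIV_bit: "(UNIV :: bit set) = {0, 1}"
    using bit_not_zero_iff by blast
  have "inj_on (\<lambda>(a, q). pCons a q) (UNIV \<times> ?P)"
    by (rule inj_onI) auto
  then have "card {p :: bit poly. degree p < Suc (Suc k)} = 2 * card ?P"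
    unfolding eq by (simp add: card_image card_cartesian_product UNIV_bit)
  moreover have "finite {p :: bit poly. degree p < Suc (Suc k)}"
    unfolding eq using Suc by (intro finite_imageI) (simp add: UNIV_bit)
  ultimately show ?case
    using Suc by simp
qed


section \<open>Primitive elements of a finite field\<close>

lemma two_le_card_UNIV: "2 \<le> card (UNIV :: 'a::{field,finite} set)"
  using card_mono[of UNIV "{0::'a, 1}"] by simp

lemma ex_not_mem_if_card_less:
  fixes A :: "'a::finite set"
  assumes "card A < card (UNIV :: 'a set)"
  shows "\<exists>x. x \<notin> A"
proof (rule ccontr)
  assume "\<nexists>x. x \<notin> A"
  then have "A = UNIV"
    by blast
  with assms show False
    by simp
qed

lemma nonzero_power_card_minus_1:
  fixes x :: "'a::{field,finite}"
  assumes "x \<noteq> 0"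
  shows "x ^ (card (UNIV :: 'a set) - 1) = 1"
proof -
  let ?U = "UNIV - {0::'a}"
  have "(\<Prod>y\<in>?U. x * y) = (\<Prod>y\<in>?U. y)"
    by (rule prod.reindex_bij_witness[of _ "\<lambda>y. y / x" "\<lambda>y. x * y"]) (use assms in auto)
  moreover have "(\<Prod>y\<in>?U. x * y) = x ^ card ?U * (\<Prod>y\<in>?U. y)"
    by (simp add: prod.distrib)
  ultimately show ?thesis
    by (simp add: card_Diff_singleton)
qed

lemma power_card_eq_same: "(x :: 'a::{field,finite}) ^ card (UNIV :: 'a set) = x"
proof (cases "x = 0")
  case False
  have "card (UNIV :: 'a set) = Suc (card (UNIV :: 'a set) - 1)"
    using two_le_card_UNIV[where 'a='a] by simp
  then show ?thesis
    by (metis False mult_1_right nonzero_power_card_minus_1 power_Suc)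
qed (simp add: finite_UNIV_card_ge_0)

lemma primitive_elem_nonzero: "primitive_elem \<gamma> \<Longrightarrow> \<gamma> \<noteq> 0"
  by (simp add: primitive_elem_def)

lemma primitive_elem_inverse: "primitive_elem \<gamma> \<Longrightarrow> primitive_elem (inverse \<gamma>)"
  unfolding primitive_elem_def
  by (metis inverse_inverse_eq inverse_nonzero_iff_nonzero power_inverse)

lemma primitive_elem_order:
  fixes \<gamma> :: "'a::{field,finite}"
  assumes "primitive_elem \<gamma>" "\<gamma> ^ k = 1" "0 < k"
  shows "card (UNIV :: 'a set) - 1 \<le> k"
proof -
  have "UNIV - {0} \<subseteq> (\<lambda>j. \<gamma> ^ j) ` {..<k}"
  proof
    fix x :: 'a
    assume "x \<in> UNIV - {0}"
    then obtain j where "x = \<gamma> ^ j"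
      using assms(1) by (auto simp: primitive_elem_def)
    also have "\<gamma> ^ j = \<gamma> ^ (j mod k)"
      by (metis assms(2) mult_div_mod_eq mult_1 power_add power_mult power_one)
    finally show "x \<in> (\<lambda>j. \<gamma> ^ j) ` {..<k}"
      using assms(3) by auto
  qed
  then have "card (UNIV - {0::'a}) \<le> k"
    by (metis card_image_le card_lessThan card_mono finite_imageI finite_lessThan order_trans)
  then show ?thesis
    by (simp add: card_Diff_singleton)
qed

lemma primitive_elem_power_inj:
  fixes \<gamma> :: "'a::{field,finite}"
  assumes "primitive_elem \<gamma>" "i < j" "j < card (UNIV :: 'a set) - 1"
  shows "\<gamma> ^ i \<noteq> \<gamma> ^ j"
proof
  assume "\<gamma> ^ i = \<gamma> ^ j"
  moreover have "\<gamma> ^ j = \<gamma> ^ i * \<gamma> ^ (j - i)"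
    using assms(2) by (simp flip: power_add)
  ultimately have "\<gamma> ^ (j - i) = 1"
    using primitive_elem_nonzero[OF assms(1)] by simp
  then show False
    using primitive_elem_order[OF assms(1)] assms(2,3) by fastforce
qed

lemma primitive_elem_exponent_less:
  fixes \<gamma> :: "'a::{field,finite}"
  assumes "primitive_elem \<gamma>" "x \<noteq> 0"
  shows "\<exists>e < card (UNIV :: 'a set) - 1. x = \<gamma> ^ e"
proof -
  let ?n = "card (UNIV :: 'a set) - 1"
  obtain k where k: "x = \<gamma> ^ k"
    using assms by (auto simp: primitive_elem_def)
  have "\<gamma> ^ k = \<gamma> ^ (k mod ?n)"
    using nonzero_power_card_minus_1[OF primitive_elem_nonzero[OF assms(1)]]
    by (metis mult_div_mod_eq mult_1 power_add power_mult power_one)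
  moreover have "k mod ?n < ?n"
    using two_le_card_UNIV[where 'a='a] by simp
  ultimately show ?thesis
    using k by blast
qed

lemma primitive_elem_exponent_ge:
  fixes \<gamma> :: "'a::{field,finite}"
  assumes "primitive_elem \<gamma>" "x \<noteq> 0"
  shows "\<exists>j \<ge> L. x = \<gamma> ^ j"
proof -
  let ?n = "card (UNIV :: 'a set) - 1"
  obtain e where "x = \<gamma> ^ e"
    using assms by (auto simp: primitive_elem_def)
  moreover have "\<gamma> ^ (e + ?n * L) = \<gamma> ^ e"
    using nonzero_power_card_minus_1[OF primitive_elem_nonzero[OF assms(1)]]
    by (simp add: power_add power_mult)
  moreover have "1 * L \<le> ?n * L"
    using two_le_card_UNIV[where 'a='a] by (intro mult_le_mono1) simp
  then have "L \<le> e + ?n * L"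
    by linarith
  ultimately show ?thesis
    by metis
qed


section \<open>Linear recurrences and cyclic codes over \<open>\<bbbF>\<^sub>2\<close>\<close>

lemma seq_minpoly_eqI:
  assumes annihilates_iff: "\<And>c. seq_annihilates s c \<longleftrightarrow> coeff c 0 = 1 \<and> g dvd c"
    and "coeff g 0 = 1"
  shows "seq_minpoly s = g"
proof -
  have g: "seq_annihilates s g"
    using assms by simp
  have g_least: "degree g \<le> degree d" if "seq_annihilates s d" for d
    using that annihilates_iff by (auto intro: dvd_imp_degree_le)
  let ?c = "seq_minpoly s"
  have "seq_annihilates s ?c \<and> (\<forall>d. seq_annihilates s d \<longrightarrow> degree ?c \<le> degree d)"
    unfolding seq_minpoly_def by (rule someI[of _ g]) (use g g_least in blast)
  then obtain u where u: "?c = g * u" and "coeff ?c 0 = 1" and "degree ?c \<le> degree g"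
    using annihilates_iff g by (blast elim: dvdE)
  then have "u \<noteq> 0" "g \<noteq> 0"
    by auto
  then have "degree u = 0"
    using \<open>degree ?c \<le> degree g\<close> u by (simp add: degree_mult_eq)
  then obtain a where "u = [:a:]"
    by (rule degree_eq_zeroE)
  with \<open>u \<noteq> 0\<close> have "u = 1"
    by (simp add: one_pCons)
  with u show ?thesis
    by simp
qed

lemma finite_cyclic_code: "finite (cyclic_code n g)"
proof (cases n)
  case (Suc k)
  then show ?thesis
    using card_bit_polys_degree_less[of k]
    by (auto simp: cyclic_code_def intro: finite_subset[rotated])
qed (simp add: cyclic_code_def)

lemma card_cyclic_code:
  assumes "g \<noteq> 0" "degree g < n"
  shows "card (cyclic_code n g) = 2 ^ (n - degree g)"
proof -
  let ?k = "n - degree g"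
  have "cyclic_code n g = (\<lambda>r. g * r) ` {r. degree r < ?k}"
  proof (intro set_eqI iffI)
    fix c
    assume "c \<in> cyclic_code n g"
    then obtain r where "c = g * r" "degree c < n"
      by (auto simp: cyclic_code_def elim: dvdE)
    moreover from this have "degree r < ?k"
      using assms by (cases "r = 0") (auto simp: degree_mult_eq)
    ultimately show "c \<in> (\<lambda>r. g * r) ` {r. degree r < ?k}"
      by blast
  next
    fix c
    assume "c \<in> (\<lambda>r. g * r) ` {r. degree r < ?k}"
    then obtain r where "c = g * r" "degree r < ?k"
      by blast
    moreover have "degree (g * r) \<le> degree g + degree r"
      by (rule degree_mult_le)
    ultimately show "c \<in> cyclic_code n g"
      by (simp add: cyclic_code_def)
  qed
  moreover have "inj_on (\<lambda>r. g * r) {r. degree r < ?k}"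
    using assms(1) by (auto simp: inj_on_def)
  moreover have "?k = Suc (?k - 1)"
    using assms(2) by simp
  ultimately show ?thesis
    using card_bit_polys_degree_less[of "?k - 1"] by (simp add: card_image)
qed


section \<open>The field with \<open>2^m\<close> elements\<close>

locale gf2m =
  fixes \<alpha> :: "'a::{field,finite}" and m :: nat
  assumes char2: "(1::'a) + 1 = 0"
    and card_UNIV: "card (UNIV :: 'a set) = 2 ^ m"
    and primitive: "primitive_elem \<alpha>"
begin

lemmas add_self [simp] = add_self_char2[OF char2]
  and add_eq_0_iff = add_eq_0_iff_char2[OF char2]
  and add_eq_iff = add_eq_iff_char2[OF char2]
  and of_bit_sum = of_bit_sum[OF char2]
  and poly_F2_add [simp] = poly_F2_add[OF char2]
  and poly_F2_mult [simp] = poly_F2_mult[OF char2]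
  and add_power_two_power = add_power_two_power[OF char2]
  and sum_power_two_power = sum_power_two_power[OF char2]
  and poly_F2_power_two_power = poly_F2_power_two_power[OF char2]

lemma m_pos: "0 < m"
  using two_le_card_UNIV[where 'a='a] card_UNIV by (cases m) auto

lemma nonzero_power_2m_minus_1: "(x::'a) \<noteq> 0 \<Longrightarrow> x ^ (2 ^ m - 1) = 1"
  using nonzero_power_card_minus_1 card_UNIV by metis

lemma power_2m_eq_same: "(x::'a) ^ 2 ^ m = x"
  using power_card_eq_same card_UNIV by metis

lemma exists_not_0_1: "\<exists>z::'a. z \<noteq> 0 \<and> z \<noteq> 1" if "1 < m"
proof -
  have "card {0::'a, 1} < card (UNIV :: 'a set)"
    using card_UNIV that power_strict_increasing[of 1 m "2::nat"] by simp
  then show ?thesis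
    using ex_not_mem_if_card_less by blast
qed

lemma trace_0 [simp]: "trace2 m (0::'a) = 0"
  using m_pos by (simp add: trace2_def power_0_left)

lemma trace_add: "trace2 m (x + y :: 'a) = trace2 m x + trace2 m y"
  by (simp add: trace2_def add_power_two_power sum.distrib)

lemma trace_sum: "trace2 m (\<Sum>i\<in>A. f i :: 'a) = (\<Sum>i\<in>A. trace2 m (f i))"
  by (induction A rule: infinite_finite_induct) (simp_all add: trace_add)

lemma trace_of_bit_mult: "trace2 m (of_bit b * y :: 'a) = of_bit b * trace2 m y"
  by (cases b) simp_all

lemma trace_square: "trace2 m (y ^ 2 :: 'a) = trace2 m y"
proof -
  obtain k where m: "m = Suc k"
    using m_pos by (cases m) auto
  have "trace2 m (y ^ 2) = (\<Sum>i<m. y ^ 2 ^ Suc i)"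
    by (simp add: trace2_def power_mult[symmetric] mult.commute)
  also have "\<dots> = (\<Sum>i<k. y ^ 2 ^ Suc i) + y"
    using power_2m_eq_same[of y] by (simp add: m)
  also have "\<dots> = trace2 m y"
    unfolding trace2_def m sum.lessThan_Suc_shift by simp
  finally show ?thesis .
qed

lemma trace_power_two_power: "trace2 m (y ^ 2 ^ k :: 'a) = trace2 m y"
proof (induction k)
  case (Suc k)
  have "y ^ 2 ^ Suc k = (y ^ 2 ^ k) ^ 2"
    by (simp add: power_mult[symmetric] mult.commute)
  then show ?case
    using Suc trace_square by simp
qed simp

lemma trace_eq_0_or_1: "trace2 m (y::'a) = 0 \<or> trace2 m y = 1"
proof -
  have "trace2 m y ^ 2 = (\<Sum>i<m. (y ^ 2 ^ i) ^ 2)"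
    using sum_power_two_power[of "\<lambda>i. y ^ 2 ^ i" "{..<m}" 1] by (simp add: trace2_def)
  also have "\<dots> = trace2 m (y ^ 2)"
    by (simp add: trace2_def power_mult[symmetric] mult.commute)
  finally have "trace2 m y ^ 2 = trace2 m y"
    by (simp add: trace_square)
  then have "trace2 m y * (trace2 m y - 1) = 0"
    by (simp add: power2_eq_square algebra_simps)
  then show ?thesis
    by simp
qed

lemma trace_1: "odd m \<Longrightarrow> trace2 m (1::'a) = 1"
  by (auto simp: trace2_def elim!: oddE)

lemma trace_nonconstant: "\<exists>z w :: 'a. z \<noteq> 0 \<and> w \<noteq> 0 \<and> trace2 m z \<noteq> trace2 m w"
  if "odd m" "1 < m"
proof -
  obtain z :: 'a where z: "z \<noteq> 0" "z \<noteq> 1"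
    using exists_not_0_1 \<open>1 < m\<close> by blast
  then have "z + 1 \<noteq> 0"
    by (simp add: add_eq_0_iff)
  moreover have "trace2 m (z + 1) = trace2 m z + 1"
    using trace_1[OF \<open>odd m\<close>] by (simp add: trace_add)
  then have "trace2 m (z + 1) \<noteq> trace2 m z"
    by simp
  ultimately show ?thesis
    using z(1) by blast
qed

lemma exists_poly_F2_root: "\<exists>p. p \<noteq> 0 \<and> degree p \<le> m \<and> poly_F2 p (\<gamma>::'a) = 0"
proof -
  let ?P = "{p :: bit poly. degree p < Suc m}"
  have "\<not> inj_on (\<lambda>p. poly_F2 p \<gamma>) ?P"
  proof
    assume "inj_on (\<lambda>p. poly_F2 p \<gamma>) ?P"
    then have "card ?P \<le> card (UNIV :: 'a set)"
      by (rule card_inj_on_le) auto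
    then show False
      using card_bit_polys_degree_less[of m] card_UNIV by simp
  qed
  then obtain p q where "p \<in> ?P" "q \<in> ?P" "p \<noteq> q" "poly_F2 p \<gamma> = poly_F2 q \<gamma>"
    unfolding inj_on_def by blast
  moreover from this have "poly_F2 (p - q) \<gamma> = 0"
    unfolding bit_poly_diff_eq_add by (simp add: add_eq_0_iff)
  ultimately show ?thesis
    using degree_diff_le_max[of p q] by (intro exI[of _ "p - q"]) auto
qed

lemma is_minpoly_F2_minpoly_F2: "is_minpoly_F2 (\<gamma>::'a) (minpoly_F2 \<gamma>)"
proof -
  obtain p0 where "p0 \<noteq> 0" "poly_F2 p0 \<gamma> = 0"
    using exists_poly_F2_root by blast
  then obtain p where p: "p \<noteq> 0" "poly_F2 p \<gamma> = 0"
    and least: "\<And>q. q \<noteq> 0 \<and> poly_F2 q \<gamma> = 0 \<Longrightarrow> degree p \<le> degree q"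
    using ex_has_least_nat[of "\<lambda>p. p \<noteq> 0 \<and> poly_F2 p \<gamma> = 0" p0 degree] by blast
  then have "is_minpoly_F2 \<gamma> p"
    by (simp add: is_minpoly_F2_def flip: bit_not_zero_iff)
  then show ?thesis
    unfolding minpoly_F2_def by (rule someI)
qed

lemma minpoly_F2_nonzero: "minpoly_F2 (\<gamma>::'a) \<noteq> 0"
  using is_minpoly_F2_minpoly_F2[of \<gamma>] by (auto simp: is_minpoly_F2_def)

lemma poly_F2_minpoly_F2 [simp]: "poly_F2 (minpoly_F2 \<gamma>) (\<gamma>::'a) = 0"
  using is_minpoly_F2_minpoly_F2[of \<gamma>] by (simp add: is_minpoly_F2_def)

lemma degree_minpoly_F2_le: "q \<noteq> 0 \<Longrightarrow> poly_F2 q (\<gamma>::'a) = 0 \<Longrightarrow> degree (minpoly_F2 \<gamma>) \<le> degree q"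
  using is_minpoly_F2_minpoly_F2[of \<gamma>] by (simp add: is_minpoly_F2_def)

lemma minpoly_F2_dvd_iff: "minpoly_F2 \<gamma> dvd p \<longleftrightarrow> poly_F2 p (\<gamma>::'a) = 0"
proof
  assume "poly_F2 p \<gamma> = 0"
  then have "poly_F2 (p mod minpoly_F2 \<gamma>) \<gamma> = 0"
    by (metis div_mult_mod_eq poly_F2_add poly_F2_mult poly_F2_minpoly_F2 mult_zero_right add_0)
  then have "p mod minpoly_F2 \<gamma> = 0"
    using degree_minpoly_F2_le degree_mod_less[OF minpoly_F2_nonzero] leD by blast
  then show "minpoly_F2 \<gamma> dvd p"
    by (simp add: mod_eq_0_iff_dvd)
qed auto

lemma coeff_0_minpoly_F2:
  assumes "(\<gamma>::'a) \<noteq> 0"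
  shows "coeff (minpoly_F2 \<gamma>) 0 = 1"
proof (rule ccontr)
  assume "coeff (minpoly_F2 \<gamma>) 0 \<noteq> 1"
  then obtain q where q: "minpoly_F2 \<gamma> = pCons 0 q"
    by (metis bit_not_one_iff coeff_pCons_0 pCons_cases)
  then have "q \<noteq> 0"
    using minpoly_F2_nonzero by auto
  moreover have "poly_F2 q \<gamma> = 0"
    using poly_F2_minpoly_F2[of \<gamma>] assms by (simp add: q map_poly_pCons)
  ultimately have "degree (minpoly_F2 \<gamma>) \<le> degree q"
    by (rule degree_minpoly_F2_le)
  then show False
    using q \<open>q \<noteq> 0\<close> by simp
qed

lemma degree_minpoly_F2_primitive:
  assumes "primitive_elem (\<gamma>::'a)"
  shows "degree (minpoly_F2 \<gamma>) = m"
proof (rule antisym)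
  show "degree (minpoly_F2 \<gamma>) \<le> m"
    using exists_poly_F2_root[of \<gamma>] degree_minpoly_F2_le by fastforce
  let ?M = "map_poly (of_bit :: bit \<Rightarrow> 'a) (minpoly_F2 \<gamma>)"
  have "\<gamma> ^ 2 ^ i \<noteq> \<gamma> ^ 2 ^ j" if "i < j" "j < m" for i j
  proof -
    have "(2::nat) ^ Suc j \<le> 2 ^ m" "(2::nat) \<le> 2 ^ j"
      using that by (intro power_increasing self_le_power; simp)+
    then have "(2::nat) ^ j < 2 ^ m - 1"
      by simp
    then show ?thesis
      using primitive_elem_power_inj[OF assms] that card_UNIV by simp
  qed
  then have "inj_on (\<lambda>i. \<gamma> ^ 2 ^ i) {..<m}"
    by (metis (no_types, lifting) inj_onI lessThan_iff linorder_neqE_nat)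
  then have "m = card ((\<lambda>i. \<gamma> ^ 2 ^ i) ` {..<m})"
    by (simp add: card_image)
  also have "\<dots> \<le> card {x. poly ?M x = 0}"
    using poly_F2_power_two_power[of "minpoly_F2 \<gamma>" \<gamma>]
    by (intro card_mono) (auto simp: minpoly_F2_nonzero map_poly_eq_0_iff poly_roots_finite power_0_left)
  also have "\<dots> \<le> degree (minpoly_F2 \<gamma>)"
    using card_poly_roots_bound[of ?M] minpoly_F2_nonzero
    by (simp add: map_poly_eq_0_iff degree_map_poly)
  finally show "m \<le> degree (minpoly_F2 \<gamma>)" .
qed


lemma primitive_elem_ne_1: "primitive_elem (\<gamma>::'a) \<Longrightarrow> 1 < m \<Longrightarrow> \<gamma> \<noteq> 1"
  using primitive_elem_order[of \<gamma> 1] card_UNIV power_strict_increasing[of 1 m "2::nat"] by auto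

lemma generator_dvd_iff:
  assumes "(\<gamma>::'a) \<noteq> 1"
  shows "[:-1, 1:] * minpoly_F2 \<gamma> dvd c \<longleftrightarrow> poly c 1 = 0 \<and> poly_F2 c \<gamma> = 0"
proof
  assume "[:-1, 1:] * minpoly_F2 \<gamma> dvd c"
  then show "poly c 1 = 0 \<and> poly_F2 c \<gamma> = 0"
    by (auto elim!: dvdE simp del: mult_pCons_left)
next
  assume c: "poly c 1 = 0 \<and> poly_F2 c \<gamma> = 0"
  then obtain r where r: "c = [:-1, 1:] * r"
    using poly_eq_0_iff_dvd[of c 1] by (auto elim: dvdE)
  have "poly_F2 [:-1, 1:] \<gamma> = \<gamma> + 1"
    by (simp add: map_poly_pCons)
  then have "poly_F2 r \<gamma> = 0"
    using c r assms by (simp add: add_eq_0_iff del: mult_pCons_left)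
  then show "[:-1, 1:] * minpoly_F2 \<gamma> dvd c"
    unfolding r by (simp add: minpoly_F2_dvd_iff del: mult_pCons_left)
qed


subsection \<open>The sequence \<open>1 + Tr(\<alpha>\<^sup>t)\<close>\<close>

context
  fixes s :: "nat \<Rightarrow> bit"
  assumes s: "\<And>t. of_bit (s t) = trace2 m (\<alpha> ^ t) + 1"
begin

lemma recurrence_sum:
  assumes "degree c \<le> i"
  shows "of_bit (\<Sum>j\<le>degree c. coeff c j * s (i - j))
    = of_bit (poly c 1) + trace2 m (\<alpha> ^ i * poly_F2 c (inverse \<alpha>))"
proof -
  let ?a = "\<lambda>j. of_bit (coeff c j) :: 'a"
  have \<alpha>: "\<alpha> ^ (i - j) = \<alpha> ^ i * inverse \<alpha> ^ j" if "j \<le> degree c" for j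
    using that assms primitive_elem_nonzero[OF primitive]
    by (simp add: power_diff power_inverse divide_inverse)
  have "of_bit (\<Sum>j\<le>degree c. coeff c j * s (i - j)) = (\<Sum>j\<le>degree c. ?a j * (trace2 m (\<alpha> ^ (i - j)) + 1))"
    by (simp add: of_bit_sum of_bit_mult s)
  also have "\<dots> = (\<Sum>j\<le>degree c. ?a j) + (\<Sum>j\<le>degree c. ?a j * trace2 m (\<alpha> ^ i * inverse \<alpha> ^ j))"
    by (simp add: \<alpha> sum.distrib algebra_simps)
  also have "(\<Sum>j\<le>degree c. ?a j) = of_bit (poly c 1)"
    by (simp add: poly_altdef of_bit_sum)
  also have "\<alpha> ^ i * poly_F2 c (inverse \<alpha>) = (\<Sum>j\<le>degree c. ?a j * (\<alpha> ^ i * inverse \<alpha> ^ j))"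
    by (simp add: poly_altdef degree_map_poly coeff_map_poly sum_distrib_left algebra_simps)
  then have "(\<Sum>j\<le>degree c. ?a j * trace2 m (\<alpha> ^ i * inverse \<alpha> ^ j))
      = trace2 m (\<alpha> ^ i * poly_F2 c (inverse \<alpha>))"
    by (simp add: trace_sum trace_of_bit_mult)
  finally show ?thesis .
qed

lemma seq_annihilates_iff:
  assumes "odd m" "1 < m"
  shows "seq_annihilates s c \<longleftrightarrow> coeff c 0 = 1 \<and> poly c 1 = 0 \<and> poly_F2 c (inverse \<alpha>) = 0"
proof
  assume c: "coeff c 0 = 1 \<and> poly c 1 = 0 \<and> poly_F2 c (inverse \<alpha>) = 0"
  show "seq_annihilates s c"
    unfolding seq_annihilates_def
  proof (intro conjI allI impI)
    fix i
    assume "degree c \<le> i"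
    then have "of_bit (\<Sum>j\<le>degree c. coeff c j * s (i - j)) = (0::'a)"
      using c by (simp add: recurrence_sum)
    then show "(\<Sum>j\<le>degree c. coeff c j * s (i - j)) = 0"
      by simp
  qed (use c in simp)
next
  assume ann: "seq_annihilates s c"
  let ?e = "of_bit (poly c 1) :: 'a" and ?b = "poly_F2 c (inverse \<alpha>)"
  have rec: "?e + trace2 m (\<alpha> ^ i * ?b) = 0" if "degree c \<le> i" for i
    using ann that recurrence_sum[OF that] by (simp add: seq_annihilates_def)
  have "?b = 0"
  proof (rule ccontr)
    assume "?b \<noteq> 0"
    have "?e + trace2 m z = 0" if "z \<noteq> 0" for z
    proof -
      obtain j where "degree c \<le> j" "z / ?b = \<alpha> ^ j"
        using primitive_elem_exponent_ge[OF primitive, of "z / ?b"] \<open>?b \<noteq> 0\<close> \<open>z \<noteq> 0\<close> by auto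
      then show ?thesis
        using rec \<open>?b \<noteq> 0\<close> by (metis nonzero_eq_divide_eq)
    qed
    then show False
      using trace_nonconstant[OF assms] add_left_cancel by metis
  qed
  then have "?e = 0"
    using rec[of "degree c"] by simp
  then show "coeff c 0 = 1 \<and> poly c 1 = 0 \<and> ?b = 0"
    using ann \<open>?b = 0\<close> by (simp add: seq_annihilates_def)
qed

end


subsection \<open>The even-weight subcode of the Hamming code\<close>

lemma exists_distinct_sum_0:
  assumes "2 < m"
  shows "\<exists>a b c :: 'a. distinct [0, 1, a, b, c] \<and> 1 + a + b + c = 0"
proof -
  have avoid: "\<exists>x::'a. x \<notin> set xs" if "length xs \<le> 4" for xs
  proof -
    have "(2::nat) ^ 3 \<le> 2 ^ m"
      using assms by (intro power_increasing) auto
    then have "card (set xs) < card (UNIV :: 'a set)"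
      using card_length[of xs] that card_UNIV by simp
    then show ?thesis
      by (rule ex_not_mem_if_card_less)
  qed
  obtain a :: 'a where a: "a \<notin> set [0, 1]"
    using avoid[of "[0, 1]"] by auto
  obtain b :: 'a where b: "b \<notin> set [0, 1, a, 1 + a]"
    using avoid[of "[0, 1, a, 1 + a]"] by auto
  define c where "c = 1 + a + b"
  have "distinct [0, 1, a, b, c]"
    using a b by (auto simp: c_def add_eq_iff add_eq_0_iff)
  moreover have "1 + a + b + c = 0"
    by (simp add: c_def)
  ultimately show ?thesis
    by blast
qed

lemma poly_F2_weight_2_nonzero:
  assumes "primitive_elem (\<gamma>::'a)" "hamming_weight c = 2" "degree c < 2 ^ m - 1"
  shows "poly_F2 c \<gamma> \<noteq> 0"
proof -
  obtain i j where ij: "{k. coeff c k \<noteq> 0} = {i, j}" "i < j"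
    using assms(2) unfolding hamming_weight_def card_2_iff
    by (metis insert_commute linorder_neqE_nat)
  then have "j \<le> degree c"
    using le_degree by blast
  then have "\<gamma> ^ i \<noteq> \<gamma> ^ j"
    using primitive_elem_power_inj[OF assms(1) \<open>i < j\<close>] assms(3) card_UNIV by simp
  then show ?thesis
    using ij by (simp add: poly_F2_eq_sum_support add_eq_0_iff)
qed

context
  fixes \<gamma> :: 'a
  assumes \<gamma>: "primitive_elem \<gamma>"
begin

lemma hamming_weight_ge_4:
  assumes "c \<in> cyclic_code (2 ^ m - 1) ([:-1, 1:] * minpoly_F2 \<gamma>)" "c \<noteq> 0"
  shows "4 \<le> hamming_weight c"
proof -
  have "degree c < 2 ^ m - 1" "poly c 1 = 0" "poly_F2 c \<gamma> = 0"
    using assms(1) by (auto simp: cyclic_code_def simp del: mult_pCons_left)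
  then have "even (hamming_weight c)" "hamming_weight c \<noteq> 2"
    using poly_F2_weight_2_nonzero[OF \<gamma>] poly_one_eq_0_iff_even_weight by blast+
  moreover have "degree c \<in> {i. coeff c i \<noteq> 0}"
    using assms(2) by (simp del: bit_not_zero_iff)
  then have "hamming_weight c \<noteq> 0"
    using finite_support_coeff[of c] by (auto simp: hamming_weight_def)
  ultimately show ?thesis
    by presburger
qed

lemma exists_codeword_weight_4:
  assumes "2 < m"
  shows "\<exists>c \<in> cyclic_code (2 ^ m - 1) ([:-1, 1:] * minpoly_F2 \<gamma>). hamming_weight c = 4"
proof -
  obtain a b c :: 'a where abc: "distinct [0, 1, a, b, c]" "1 + a + b + c = 0"
    using exists_distinct_sum_0[OF assms] by blast
  have "\<exists>e < 2 ^ m - 1. x = \<gamma> ^ e" if "x \<noteq> 0" for x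
    using primitive_elem_exponent_less[OF \<gamma> that] card_UNIV by simp
  then obtain e1 e2 e3 where e: "e1 < 2 ^ m - 1" "e2 < 2 ^ m - 1" "e3 < 2 ^ m - 1"
    and abc_eq: "a = \<gamma> ^ e1" "b = \<gamma> ^ e2" "c = \<gamma> ^ e3"
    using abc(1) by (metis distinct_length_2_or_more list.set_intros(1))
  define E where "E = [0, e1, e2, e3]"
  have powers: "map (\<lambda>e. \<gamma> ^ e) E = [1, a, b, c]"
    by (simp add: E_def abc_eq)
  then have "distinct E"
    using abc(1) distinct_map[of "\<lambda>e. \<gamma> ^ e" E] by simp
  define p where "p = (\<Sum>e\<in>set E. monom (1::bit) e)"
  have support: "{i. coeff p i \<noteq> 0} = set E"
    by (auto simp: p_def coeff_sum coeff_monom)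
  then have weight: "hamming_weight p = 4"
    using \<open>distinct E\<close> by (simp add: hamming_weight_def distinct_card E_def)
  then have "p \<noteq> 0"
    by (auto simp: hamming_weight_def)
  then have "degree p \<in> set E"
    using support leading_coeff_0_iff by blast
  then have "degree p < 2 ^ m - 1"
    using e by (auto simp: E_def)
  have "poly_F2 p \<gamma> = (\<Sum>e\<in>set E. \<gamma> ^ e)"
    by (simp only: poly_F2_eq_sum_support support)
  also have "\<dots> = 1 + a + b + c"
    using \<open>distinct E\<close> by (simp add: sum_list_distinct_conv_sum_set[symmetric] powers add.assoc)
  finally have "[:-1, 1:] * minpoly_F2 \<gamma> dvd p"
    using generator_dvd_iff[OF primitive_elem_ne_1[OF \<gamma>]] assms abc(2) weight
    by (simp add: poly_one_eq_0_iff_even_weight)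
  then show ?thesis
    using weight \<open>degree p < 2 ^ m - 1\<close> by (auto simp: cyclic_code_def)
qed

lemma min_distance_cyclic_code:
  assumes "2 < m"
  shows "min_distance (cyclic_code (2 ^ m - 1) ([:-1, 1:] * minpoly_F2 \<gamma>)) = 4"
  unfolding min_distance_def
proof (rule Min_eqI)
  show "finite (hamming_weight ` (cyclic_code (2 ^ m - 1) ([:-1, 1:] * minpoly_F2 \<gamma>) - {0}))"
    using finite_cyclic_code by blast
  show "4 \<in> hamming_weight ` (cyclic_code (2 ^ m - 1) ([:-1, 1:] * minpoly_F2 \<gamma>) - {0})"
    using exists_codeword_weight_4[OF assms] by (force simp: hamming_weight_def)
qed (use hamming_weight_ge_4 in blast)

end

end


section \<open>The sequence defined by \<open>f\<^sub>1\<close>\<close>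

lemma f1_exponent_identity:
  assumes "m = 2 * h + 1"
  shows "(2 ^ (h + 1) - 1) * 2 ^ (h + 1) = (2 ^ m - 2 ^ (h + 1) + 1) + (2 ^ m - (1::nat))"
proof -
  define q :: nat where "q = 2 ^ (h + 1)"
  have "q * q = 2 * 2 ^ m"
    by (simp add: q_def assms power_add power_mult_distrib flip: power_mult power2_eq_square)
  moreover have "q \<le> 2 ^ m" "1 \<le> q"
    using assms by (simp_all add: q_def power_increasing)
  moreover have "(q - 1) * q = q * q - q"
    by (simp add: diff_mult_distrib)
  ultimately show ?thesis
    unfolding q_def[symmetric] by linarith
qed

lemma (in gf2m) trace_f1:
  assumes "m = 2 * h + 1"
  shows "trace2 m (let x = y + 1 in x + x ^ (2 ^ (h + 1) - 1) + x ^ (2 ^ m - 2 ^ (h + 1) + 1))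
    = trace2 m (y::'a) + 1"
proof -
  have conjugate: "x ^ (2 ^ m - 2 ^ (h + 1) + 1) = (x ^ (2 ^ (h + 1) - 1)) ^ 2 ^ (h + 1)" for x :: 'a
  proof (cases "x = 0")
    case True
    show ?thesis
      using True by (simp add: power_0_left) (use one_le_power[of "2::nat" h] in linarith)
  next
    case False
    have "(x ^ (2 ^ (h + 1) - 1)) ^ 2 ^ (h + 1) = x ^ ((2 ^ m - 2 ^ (h + 1) + 1) + (2 ^ m - 1))"
      by (simp only: power_mult[symmetric] f1_exponent_identity[OF assms])
    also have "\<dots> = x ^ (2 ^ m - 2 ^ (h + 1) + 1)"
      by (simp only: power_add nonzero_power_2m_minus_1[OF False] mult_1_right)
    finally show ?thesis
      by (rule sym)
  qed
  have "odd m"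
    using assms by simp
  show ?thesis
    by (simp only: Let_def conjugate trace_add trace_power_two_power trace_1[OF \<open>odd m\<close>]
        add.assoc add_self add_0_right)
qed

theorem theorem1:
  fixes \<alpha> :: "'a::{field,finite}" and m h :: nat and s :: "nat \<Rightarrow> bit"
  assumes char2: "(1::'a) + 1 = 0"
    and card: "card (UNIV :: 'a set) = 2 ^ m"
    and mh: "m = 2 * h + 1" and m3: "m \<ge> 3"
    and prim: "primitive_elem \<alpha>"
    and s_def: "\<And>t. s t = to_bit (trace2 m
        (let x = \<alpha> ^ t + 1 in x + x ^ (2 ^ (h + 1) - 1) + x ^ (2 ^ m - 2 ^ (h + 1) + 1)))"
  shows "seq_minpoly s = [:-1, 1:] * minpoly_F2 (inverse \<alpha>)
    \<and> card (cyclic_code (2 ^ m - 1) (seq_minpoly s)) = 2 ^ (2 ^ m - 2 - m)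
    \<and> min_distance (cyclic_code (2 ^ m - 1) (seq_minpoly s)) = 4"
proof -
  interpret gf2m \<alpha> m
    using char2 card prim by unfold_locales
  have m: "odd m" "1 < m" "2 < m"
    using mh m3 by auto
  let ?g = "[:-1, 1:] * minpoly_F2 (inverse \<alpha>)"
  have \<beta>: "primitive_elem (inverse \<alpha>)" "inverse \<alpha> \<noteq> 1"
    using primitive_elem_inverse[OF prim] primitive_elem_ne_1 m(2) by blast+
  have s: "of_bit (s t) = trace2 m (\<alpha> ^ t) + 1" for t
    unfolding s_def trace_f1[OF mh] using trace_eq_0_or_1[of "\<alpha> ^ t"] by (auto simp: of_to_bit)
  have minpoly: "seq_minpoly s = ?g"
  proof (rule seq_minpoly_eqI)
    show "seq_annihilates s c \<longleftrightarrow> coeff c 0 = 1 \<and> ?g dvd c" for c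
      using seq_annihilates_iff[OF s m(1,2)] generator_dvd_iff[OF \<beta>(2)] by simp
    show "coeff ?g 0 = 1"
      using coeff_0_minpoly_F2 primitive_elem_nonzero[OF \<beta>(1)] by (simp add: coeff_mult_0)
  qed
  have "degree ?g = m + 1"
    using degree_minpoly_F2_primitive[OF \<beta>(1)] minpoly_F2_nonzero
    by (simp add: degree_mult_eq del: mult_pCons_left)
  moreover have "m + 3 \<le> 2 ^ m"
  proof -
    have "(2::nat) ^ m = 2 * 2 ^ (m - 1)"
      using m(3) by (cases m) simp_all
    then show ?thesis
      using less_exp[of "m - 1"] m(3) by linarith
  qed
  ultimately have "card (cyclic_code (2 ^ m - 1) ?g) = 2 ^ (2 ^ m - 2 - m)"
    using card_cyclic_code[of ?g] minpoly_F2_nonzero by (simp del: mult_pCons_left)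
  then show ?thesis
    using minpoly min_distance_cyclic_code[OF \<beta>(1) m(3)] by simp
qed

end
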